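(* Let $h,k$ be integers with $k>0$, $\gcd(h,k)=1$ and $h+k$ odd. Then $$B_{1}(h,k)=2(1-h)\bigl(s(h,k)-2s(h+k,2k)\bigr).$$
   Context: $[x]$ denotes the greatest integer $\le x$, and $((x))=x-[x]-\tfrac12$ if $x\notin\mathbb{Z}$, $((x))=0$ if $x\in\mathbb{Z}$. For integers $a,b$ with $b>0$: the Dedekind sum is $s(a,b)=\sum_{j=1}^{b-1}\left(\left(\frac{aj}{b}\right)\right)\left(\left(\frac{j}{b}\right)\right)$, and (for $\gcd(a,b)=1$) $$B_{1}(a,b)=\sum_{j=1}^{b-1}(-1)^{j+\left[\frac{aj}{b}\right]}\left[\frac{aj}{b}\right].$$ *)

theory Defs
  imports Complex_Main
begin

definition sawtooth :: "real \<Rightarrow> real" where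
  "sawtooth x = (if x \<in> \<int> then 0 else x - of_int \<lfloor>x\<rfloor> - 1/2)"

definition dedekind_sum :: "int \<Rightarrow> int \<Rightarrow> real" where
  "dedekind_sum a b = (\<Sum>j\<in>{1..b-1}. sawtooth (of_int (a*j) / of_int b) * sawtooth (of_int j / of_int b))"

definition B1 :: "int \<Rightarrow> int \<Rightarrow> int" where
  "B1 a b = (\<Sum>j\<in>{1..b-1}. (-1) ^ nat (j + \<lfloor>of_int (a*j) / (of_int b :: real)\<rfloor> mod 2)
                              * \<lfloor>of_int (a*j) / (of_int b :: real)\<rfloor>)"

end

theory Submission
  imports Defs
begin

text \<open>Write \<open>q\<^sub>j = \<lfloor>hj/k\<rfloor>\<close> and \<open>E = \<Sum>\<^sub>j (-1)\<^bsup>j + q\<^sub>j\<^esup>\<close>. The reflection \<open>j \<mapsto> k - j\<close>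
  sends \<open>q\<^sub>j\<close> to \<open>h - 1 - q\<^sub>j\<close> and, because \<open>h + k\<close> is odd, preserves the sign, so
  \<open>2 B\<^sub>1(h,k) = (h - 1) E\<close>. On the other side, the terms \<open>j\<close> and \<open>j + k\<close> of \<open>s(h+k,2k)\<close>
  involve \<open>((y/2))\<close> and \<open>(((y+1)/2))\<close> with \<open>y = (h+k)j/k\<close>; these are
  \<open>(((y)) \<mp> (-1)\<^bsup>\<lfloor>y\<rfloor>\<^esup>/2)/2\<close>, and \<open>\<lfloor>y\<rfloor> = j + q\<^sub>j\<close>, which yields
  \<open>s(h+k,2k) = s(h,k)/2 + E/8\<close>. Eliminating \<open>E\<close> gives the identity.\<close>

lemma sawtooth_eq_frac: "sawtooth x = (if x \<in> \<int> then 0 else frac x - 1/2)"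
  by (simp add: sawtooth_def frac_def)

lemma sawtooth_add_of_int [simp]: "sawtooth (x + of_int n) = sawtooth x"
  by (simp add: sawtooth_eq_frac)

lemma sawtooth_uminus [simp]: "sawtooth (- x) = - sawtooth x"
  by (simp add: sawtooth_eq_frac frac_neg)

lemma sawtooth_unit_interval: "0 < x \<Longrightarrow> x < 1 \<Longrightarrow> sawtooth x = x - 1/2"
  using frac_gt_0_iff[of x] by (simp add: sawtooth_eq_frac frac_eq)

lemma sawtooth_half:
  fixes y :: real
  assumes "y \<notin> \<int>"
  defines "\<epsilon> \<equiv> if even \<lfloor>y\<rfloor> then 1 else -1 :: real"
  shows "sawtooth (y/2) = (sawtooth y - \<epsilon>/2) / 2"
    and "sawtooth ((y+1)/2) = (sawtooth y + \<epsilon>/2) / 2"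
proof -
  define t where "t = frac y"
  have t: "0 < t" "t < 1" using assms frac_lt_1 by (auto simp: t_def)
  have y: "y = of_int \<lfloor>y\<rfloor> + t" by (simp add: t_def frac_def)
  have st: "sawtooth y = t - 1/2" using assms by (simp add: sawtooth_eq_frac t_def)
  have "sawtooth (y/2) = (sawtooth y - \<epsilon>/2) / 2 \<and> sawtooth ((y+1)/2) = (sawtooth y + \<epsilon>/2) / 2"
  proof (cases "even \<lfloor>y\<rfloor>")
    case True
    then obtain m where m: "\<lfloor>y\<rfloor> = 2*m" by blast
    have "y/2 = t/2 + of_int m" "(y+1)/2 = (t+1)/2 + of_int m"
      by (subst y; simp add: m field_simps)+
    then have "sawtooth (y/2) = t/2 - 1/2" "sawtooth ((y+1)/2) = t/2"
      using t by (simp_all only: sawtooth_add_of_int) (simp_all add: sawtooth_unit_interval add_divide_distrib)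
    then show ?thesis using True by (simp add: \<epsilon>_def st)
  next
    case False
    then obtain m where m: "\<lfloor>y\<rfloor> = 2*m + 1" by (metis oddE)
    have "y/2 = (t+1)/2 + of_int m" "(y+1)/2 = t/2 + of_int (m+1)"
      by (subst y; simp add: m field_simps)+
    then have "sawtooth (y/2) = t/2" "sawtooth ((y+1)/2) = t/2 - 1/2"
      using t by (simp_all only: sawtooth_add_of_int) (simp_all add: sawtooth_unit_interval add_divide_distrib)
    then show ?thesis using False by (simp add: \<epsilon>_def st)
  qed
  then show "sawtooth (y/2) = (sawtooth y - \<epsilon>/2) / 2"
    and "sawtooth ((y+1)/2) = (sawtooth y + \<epsilon>/2) / 2" by blast+
qed

lemma weighted_sawtooth_half_pair:
  fixes x y :: real
  assumes "y \<notin> \<int>"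
  shows "x/2 * sawtooth (y/2) + (x+1)/2 * sawtooth ((y+1)/2)
    = x/2 * sawtooth y + sawtooth y / 4 + (if even \<lfloor>y\<rfloor> then 1 else -1) / 8"
  unfolding sawtooth_half[OF assms] by (simp add: field_simps)

lemma sum_sawtooth_multiples:
  fixes a k :: int
  assumes "k > 0"
  shows "(\<Sum>j\<in>{1..k-1}. sawtooth (of_int (a*j) / of_int k)) = 0"
proof -
  let ?f = "\<lambda>j. sawtooth (of_int (a*j) / of_int k)"
  have "(\<Sum>j\<in>{1..k-1}. ?f j) = (\<Sum>j\<in>{1..k-1}. ?f (k - j))"
    by (rule sum.reindex_bij_witness[of _ "\<lambda>j. k - j" "\<lambda>j. k - j"]) auto
  also have "\<dots> = (\<Sum>j\<in>{1..k-1}. - ?f j)"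
  proof (rule sum.cong)
    fix j
    have reflect: "of_int (a*(k-j)) / of_int k = - (of_int (a*j) / of_int k) + (of_int a :: real)"
      using assms by (simp add: field_simps)
    show "?f (k - j) = - ?f j" by (simp only: reflect sawtooth_add_of_int sawtooth_uminus)
  qed simp
  finally show ?thesis by (simp add: sum_negf)
qed

lemma dedekind_sum_eq_weighted_sum:
  fixes a k :: int
  assumes "k > 0"
  shows "dedekind_sum a k = (\<Sum>j\<in>{1..k-1}. of_int j / of_int k * sawtooth (of_int (a*j) / of_int k))"
proof -
  have "dedekind_sum a k = (\<Sum>j\<in>{1..k-1}. of_int j / of_int k * sawtooth (of_int (a*j) / of_int k)
        - sawtooth (of_int (a*j) / of_int k) / 2)"
    unfolding dedekind_sum_def
  proof (rule sum.cong)
    fix j assume "j \<in> {1..k-1}"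
    then have saw_j: "sawtooth (of_int j / of_int k) = of_int j / of_int k - 1/2"
      using assms by (intro sawtooth_unit_interval) auto
    then show "sawtooth (of_int (a*j) / of_int k) * sawtooth (of_int j / of_int k) =
      of_int j / of_int k * sawtooth (of_int (a*j) / of_int k) - sawtooth (of_int (a*j) / of_int k) / 2"
      by (simp only: saw_j) (simp add: algebra_simps)
  qed simp
  then show ?thesis
    using sum_sawtooth_multiples[OF assms, of a] by (simp add: sum_subtractf flip: sum_divide_distrib)
qed

lemma sum_split_halves:
  fixes g :: "int \<Rightarrow> 'a::comm_monoid_add" and k :: int
  assumes "k > 0"
  shows "(\<Sum>j\<in>{1..2*k-1}. g j) = g k + (\<Sum>i\<in>{1..k-1}. g i + g (i + k))"
proof -
  have "{1..2*k-1} = {1..k-1} \<union> {k..2*k-1}" by auto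
  then have "(\<Sum>j\<in>{1..2*k-1}. g j) = (\<Sum>i\<in>{1..k-1}. g i) + (\<Sum>j\<in>{k..2*k-1}. g j)"
    by (simp add: sum.union_disjoint ivl_disj_int)
  also have "(\<Sum>j\<in>{k..2*k-1}. g j) = (\<Sum>i\<in>{0..k-1}. g (i + k))"
    by (rule sum.reindex_bij_witness[of _ "\<lambda>j. j + k" "\<lambda>j. j - k"]) auto
  also have "{0..k-1} = insert 0 {1..k-1}" using assms by auto
  finally show ?thesis by (simp add: sum.distrib ac_simps)
qed

definition B1_sign :: "int \<Rightarrow> int \<Rightarrow> int \<Rightarrow> int" where
  "B1_sign a b j = (if even (j + a*j div b) then 1 else -1)"

lemma B1_eq_sum_B1_sign: "B1 a b = (\<Sum>j\<in>{1..b-1}. B1_sign a b j * (a*j div b))"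
  unfolding B1_def B1_sign_def floor_divide_of_int_eq
proof (rule sum.cong)
  fix j assume "j \<in> {1..b-1}"
  then have "even (nat (j + a*j div b mod 2)) \<longleftrightarrow> even (j + a*j div b)"
    by (simp add: even_nat_iff)
  then show "(-1) ^ nat (j + a*j div b mod 2) * (a*j div b)
      = (if even (j + a*j div b) then 1 else -1) * (a*j div b)"
    by (simp add: power_minus1_even)
qed simp

lemma mult_diff_div_not_dvd:
  fixes m n b :: int
  assumes "b \<noteq> 0" "\<not> b dvd n"
  shows "(m*b - n) div b = m - 1 - n div b"
proof -
  have "(m*b - n) div b = (- n + m*b) div b" by simp
  also have "\<dots> = m + (- n) div b" using assms(1) by (rule div_mult_self1)
  finally have "(m*b - n) div b = m + (- n) div b" .
  with assms show ?thesis by (simp add: zdiv_zminus1_eq_if dvd_eq_mod_eq_0)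
qed

lemma not_dvd_mult_if_coprime:
  fixes a b j :: int
  assumes "coprime a b" "0 < j" "j < b"
  shows "\<not> b dvd a*j"
proof
  assume "b dvd a*j"
  with assms(1) have "b dvd j" by (simp add: coprime_commute coprime_dvd_mult_right_iff)
  with assms(2,3) show False using zdvd_imp_le by fastforce
qed

lemma two_B1_eq:
  fixes h k :: int
  assumes "k > 0" "coprime h k" "odd (h + k)"
  shows "2 * B1 h k = (h - 1) * (\<Sum>j\<in>{1..k-1}. B1_sign h k j)"
proof -
  let ?q = "\<lambda>j. h*j div k" and ?\<sigma> = "B1_sign h k"
  have q_reflect: "?q (k - j) = h - 1 - ?q j" if "j \<in> {1..k-1}" for j
    using mult_diff_div_not_dvd[of k "h*j" h] not_dvd_mult_if_coprime[OF assms(2), of j] assms(1) that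
    by (simp add: right_diff_distrib mult.commute)
  have \<sigma>_reflect: "?\<sigma> (k - j) = ?\<sigma> j" if "j \<in> {1..k-1}" for j
  proof -
    have parity: "even (k - j + (h - 1 - x)) \<longleftrightarrow> even (j + x)" for x
      using assms(3) by presburger
    have "even (k - j + ?q (k - j)) \<longleftrightarrow> even (j + ?q j)"
      unfolding q_reflect[OF that] by (rule parity)
    then show ?thesis by (simp add: B1_sign_def)
  qed
  have "B1 h k = (\<Sum>j\<in>{1..k-1}. ?\<sigma> (k - j) * ?q (k - j))"
    unfolding B1_eq_sum_B1_sign
    by (rule sum.reindex_bij_witness[of _ "\<lambda>j. k - j" "\<lambda>j. k - j"]) auto
  also have "\<dots> = (\<Sum>j\<in>{1..k-1}. (h - 1) * ?\<sigma> j - ?\<sigma> j * ?q j)"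
  proof (rule sum.cong)
    fix j assume j: "j \<in> {1..k-1}"
    show "?\<sigma> (k - j) * ?q (k - j) = (h - 1) * ?\<sigma> j - ?\<sigma> j * ?q j"
      unfolding q_reflect[OF j] \<sigma>_reflect[OF j] by (simp add: algebra_simps)
  qed simp
  also have "\<dots> = (h - 1) * (\<Sum>j\<in>{1..k-1}. ?\<sigma> j) - B1 h k"
    by (simp add: B1_eq_sum_B1_sign sum_subtractf sum_distrib_left)
  finally show ?thesis by linarith
qed

lemma dedekind_sum_double:
  fixes h k :: int
  assumes "k > 0" "coprime h k" "odd (h + k)"
  shows "dedekind_sum (h + k) (2*k)
    = dedekind_sum h k / 2 + (\<Sum>j\<in>{1..k-1}. of_int (B1_sign h k j)) / 8"
proof -
  obtain m where "h + k = 2*m + 1" using assms(3) by (metis oddE)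
  then have m: "real_of_int h = 2 * of_int m + 1 - of_int k" by (simp add: algebra_simps flip: of_int_add)
  let ?s = "\<lambda>j. sawtooth (of_int (h*j) / of_int k)"
  define g where "g j = of_int j / of_int (2*k) * sawtooth (of_int ((h+k)*j) / of_int (2*k))" for j
  have middle: "g k = 0"
  proof -
    have "of_int ((h+k)*k) / of_int (2*k) = 1/2 + (of_int m :: real)"
      using assms(1) by (simp add: m field_simps)
    then show ?thesis by (simp add: g_def sawtooth_unit_interval)
  qed
  have pair: "g j + g (j + k) = of_int j / of_int k * ?s j / 2 + ?s j / 4 + of_int (B1_sign h k j) / 8"
    if j: "j \<in> {1..k-1}" for j
  proof -
    define x where "x = of_int j / (of_int k :: real)"
    define y where "y = of_int (h*j) / of_int k + (of_int j :: real)"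
    have "of_int (h*j) / of_int k \<notin> (\<int> :: real set)"
      using not_dvd_mult_if_coprime[OF assms(2), of j] j assms(1) by (intro fraction_not_in_Ints) auto
    then have y_not_int: "y \<notin> \<int>" by (simp add: y_def)
    have "\<lfloor>y\<rfloor> = j + h*j div k"
      unfolding y_def floor_add_int[symmetric] floor_divide_of_int_eq by simp
    then have sign: "(if even \<lfloor>y\<rfloor> then 1 else -1) = real_of_int (B1_sign h k j)"
      by (simp add: B1_sign_def)
    have "of_int j / of_int (2*k) = x/2"
      "of_int (j+k) / of_int (2*k) = (x+1)/2"
      "of_int ((h+k)*j) / of_int (2*k) = y/2"
      "of_int ((h+k)*(j+k)) / of_int (2*k) = (y+1)/2 + of_int m"
      using assms(1) by (simp_all add: x_def y_def m field_simps)
    then have "g j + g (j + k) = x/2 * sawtooth (y/2) + (x+1)/2 * sawtooth ((y+1)/2)"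
      unfolding g_def by (simp only: sawtooth_add_of_int)
    also have "\<dots> = x/2 * ?s j + ?s j / 4 + of_int (B1_sign h k j) / 8"
      unfolding weighted_sawtooth_half_pair[OF y_not_int] sign by (simp add: y_def)
    finally show ?thesis by (simp add: x_def)
  qed
  have "dedekind_sum (h + k) (2*k) = (\<Sum>j\<in>{1..2*k-1}. g j)"
    unfolding g_def using assms(1) by (simp add: dedekind_sum_eq_weighted_sum)
  also have "\<dots> = (\<Sum>j\<in>{1..k-1}. of_int j / of_int k * ?s j / 2 + ?s j / 4 + of_int (B1_sign h k j) / 8)"
    using assms(1) by (simp add: sum_split_halves middle pair)
  also have "\<dots> = (\<Sum>j\<in>{1..k-1}. of_int j / of_int k * ?s j) / 2 + (\<Sum>j\<in>{1..k-1}. ?s j) / 4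
      + (\<Sum>j\<in>{1..k-1}. of_int (B1_sign h k j)) / 8"
    by (simp add: sum.distrib sum_divide_distrib)
  also have "\<dots> = dedekind_sum h k / 2 + (\<Sum>j\<in>{1..k-1}. of_int (B1_sign h k j)) / 8"
    unfolding dedekind_sum_eq_weighted_sum[OF assms(1)] sum_sawtooth_multiples[OF assms(1)] by simp
  finally show ?thesis .
qed

theorem theorem19:
  fixes h k :: int
  assumes "k > 0" and "gcd h k = 1" and "odd (h + k)"
  shows "real_of_int (B1 h k) = 2 * (1 - of_int h) * (dedekind_sum h k - 2 * dedekind_sum (h + k) (2 * k))"
proof -
  have coprime: "coprime h k" using assms(2) by (simp add: coprime_iff_gcd_eq_1)
  define E where "E = (\<Sum>j\<in>{1..k-1}. real_of_int (B1_sign h k j))"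
  have B1_eq: "2 * real_of_int (B1 h k) = (of_int h - 1) * E"
    using arg_cong[OF two_B1_eq[OF assms(1) coprime assms(3)], of real_of_int]
    by (simp add: E_def)
  have double: "dedekind_sum (h + k) (2 * k) = dedekind_sum h k / 2 + E / 8"
    unfolding E_def by (rule dedekind_sum_double[OF assms(1) coprime assms(3)])
  show ?thesis unfolding double using B1_eq by (simp add: algebra_simps)
qed

end
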